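(* Let $n$ be even, let $r\le s\le 2r-1$, and let $m=s-r+1$ (the number of edges of $P^{(r)}_s$). Then $$\tau(n,P^{(r)}_s)\le \tau(n,LP^{(r)}_s)\le 2h(n,r,m)+h(n,r-1,m).$$
   Context: An ordered $r$-uniform hypergraph is an $r$-uniform hypergraph whose vertex set is linearly ordered. $K^{(r)}_n$ denotes the ordered complete $r$-uniform hypergraph on vertex set $[n]=\{1,\dots,n\}$ (natural order), whose edges are all $r$-subsets of $[n]$. A copy of an ordered hypergraph $H$ in $K^{(r)}_n$ is the image of $H$ under an order-preserving injection $f:V(H)\to[n]$ (its edges being the images $f(e)$, $e\in E(H)$). The natural (tight) path $P^{(r)}_s$ has vertices $v_1<\dots<v_s$ and its edges are all sets of $r$ consecutive vertices $\{v_j,\dots,v_{j+r-1}\}$, $1\le j\le s-r+1$. The loose path $LP^{(r)}_s$ is obtained from $P^{(r)}_s$ by keeping only its first edge $\{v_1,\dots,v_r\}$ and its last edge $\{v_{s-r+1},\dots,v_s\}$ (same vertex set and order). For an ordered $r$-uniform $H$, an $H$-transversal is a set of edges of $K^{(r)}_n$ meeting (the edge set of) every copy of $H$ in $K^{(r)}_n$, and $\tau(n,H)$ is the minimum size of an $H$-transversal. An interval partition $(X,Y,Z)$ of $[n]$ consists of consecutive (possibly empty) intervals $X<Y<Z$ with union $[n]$. A set $S\subseteq[n]$ is $m$-left-biased if there is an interval partition $(X,Y,Z)$ of $[n]$ with $|X|=|Z|$, $|X\cap S|=m$ and $|Z\cap S|=0$. $h(n,t,m)$ denotes the number of $t$-subsets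 of $[n]$ that are $m$-left-biased. *)

theory Defs
  imports Main
begin

text \<open>An ordered r-uniform hypergraph H is given by its number of vertices s
  (vertex set {1..s} with the natural order) and its edge set E (a set of subsets
  of {1..s}).\<close>

definition complete_edges :: "nat \<Rightarrow> nat \<Rightarrow> nat set set" where
  "complete_edges n r = {e. e \<subseteq> {1..n} \<and> card e = r}"

definition copies :: "nat \<Rightarrow> nat \<Rightarrow> nat set set \<Rightarrow> nat set set set" where
  "copies n s E = {(\<lambda>e. f ` e) ` E | f. strict_mono_on {1..s} f \<and> f ` {1..s} \<subseteq> {1..n}}"

definition is_transversal :: "nat \<Rightarrow> nat \<Rightarrow> nat \<Rightarrow> nat set set \<Rightarrow> nat set set \<Rightarrow> bool" where
  "is_transversal n r s E T \<longleftrightarrow> T \<subseteq> complete_edges n r \<and>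
     (\<forall>C \<in> copies n s E. T \<inter> C \<noteq> {})"

definition tau :: "nat \<Rightarrow> nat \<Rightarrow> nat \<Rightarrow> nat set set \<Rightarrow> nat" where
  "tau n r s E = (LEAST k. \<exists>T. is_transversal n r s E T \<and> card T = k)"

definition tight_path :: "nat \<Rightarrow> nat \<Rightarrow> nat set set" where
  "tight_path r s = {{j..j + r - 1} | j. 1 \<le> j \<and> j \<le> s - r + 1}"

definition loose_path :: "nat \<Rightarrow> nat \<Rightarrow> nat set set" where
  "loose_path r s = {{1..r}, {s - r + 1..s}}"

definition interval_partition :: "nat \<Rightarrow> nat set \<Rightarrow> nat set \<Rightarrow> nat set \<Rightarrow> bool" where
  "interval_partition n X Y Z \<longleftrightarrow> (\<exists>a b. a \<le> b \<and> b \<le> n \<and>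
     X = {1..a} \<and> Y = {a+1..b} \<and> Z = {b+1..n})"

definition left_biased :: "nat \<Rightarrow> nat \<Rightarrow> nat set \<Rightarrow> bool" where
  "left_biased n m S \<longleftrightarrow> (\<exists>X Y Z. interval_partition n X Y Z \<and> card X = card Z \<and>
     card (X \<inter> S) = m \<and> card (Z \<inter> S) = 0)"

definition h :: "nat \<Rightarrow> nat \<Rightarrow> nat \<Rightarrow> nat" where
  "h n t m = card {S. S \<subseteq> {1..n} \<and> card S = t \<and> left_biased n m S}"

end

theory Submission
  imports Defs
begin

text \<open>The loose path is a subgraph of the tight path, so every transversal of the loose
  path is one of the tight path. For the upper bound, let a copy of the loose path have
  vertices f 1 < ... < f s; its edges are f`{1..r} and f`{m..s}, as m = s - r + 1.
  Compare f m + f r with n + 1. If it is smaller, the first edge is m-left-biased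
  (take X = {1..f m}). If it is larger, the mirror image x \<mapsto> n + 1 - x of the last edge is
  m-left-biased, by the same argument applied to the mirrored copy. If it is equal, then
  m < r because n is even, f`{1..r-1} is m-left-biased, and the first edge arises from it
  by adding the mirror image n + 1 - f m of its m-th smallest element. So the m-left-biased
  r-sets, their mirror images, and the r-sets obtained in the third way form a transversal.\<close>

lemma is_transversal_supergraph:
  assumes "E \<subseteq> E'" and "is_transversal n r s E T"
  shows "is_transversal n r s E' T"
  unfolding is_transversal_def
proof (intro conjI ballI)
  show "T \<subseteq> complete_edges n r"
    using assms(2) unfolding is_transversal_def by blast
next
  fix C assume "C \<in> copies n s E'"
  then obtain f where f: "strict_mono_on {1..s} f" "f ` {1..s} \<subseteq> {1..n}"
    and C: "C = (\<lambda>e. f ` e) ` E'"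
    unfolding copies_def by blast
  have "(\<lambda>e. f ` e) ` E \<in> copies n s E"
    unfolding copies_def using f by blast
  then have "T \<inter> (\<lambda>e. f ` e) ` E \<noteq> {}"
    using assms(2) unfolding is_transversal_def by blast
  moreover have "(\<lambda>e. f ` e) ` E \<subseteq> C"
    unfolding C using assms(1) by blast
  ultimately show "T \<inter> C \<noteq> {}" by blast
qed

lemma tau_le_card:
  assumes "is_transversal n r s E T"
  shows "tau n r s E \<le> card T"
  unfolding tau_def by (rule Least_le) (use assms in blast)

lemma tau_antimono:
  assumes "E \<subseteq> E'" and "is_transversal n r s E T"
  shows "tau n r s E' \<le> tau n r s E"
proof -
  obtain T0 where T0: "is_transversal n r s E T0" "card T0 = tau n r s E"
    using LeastI_ex[of "\<lambda>k. \<exists>T. is_transversal n r s E T \<and> card T = k"] assms(2)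
    unfolding tau_def by blast
  have "tau n r s E' \<le> card T0"
    using is_transversal_supergraph[OF assms(1) T0(1)] by (rule tau_le_card)
  then show ?thesis using T0(2) by simp
qed

lemma loose_path_subset_tight_path:
  assumes "1 \<le> r" and "r \<le> s"
  shows "loose_path r s \<subseteq> tight_path r s"
  unfolding loose_path_def tight_path_def using assms
  by (auto intro!: exI[of _ 1] exI[of _ "s - r + 1"])

definition mirror :: "nat \<Rightarrow> nat set \<Rightarrow> nat set" where
  "mirror n S = (\<lambda>x. n + 1 - x) ` S"

lemma mirror_mirror:
  assumes "S \<subseteq> {1..n}"
  shows "mirror n (mirror n S) = S"
proof -
  have "(\<lambda>x. n + 1 - (n + 1 - x)) ` S = (\<lambda>x. x) ` S"
    by (rule image_cong) (use assms in auto)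
  then show ?thesis unfolding mirror_def image_image by simp
qed

lemma mirror_subset: "S \<subseteq> {1..n} \<Longrightarrow> mirror n S \<subseteq> {1..n}"
  unfolding mirror_def by (auto dest!: subsetD)

lemma card_mirror:
  assumes "S \<subseteq> {1..n}"
  shows "card (mirror n S) = card S"
proof -
  have "inj_on (\<lambda>x. n + 1 - x) S"
    by (rule inj_onI) (use assms in \<open>auto dest!: subsetD\<close>)
  then show ?thesis unfolding mirror_def by (rule card_image)
qed

lemma mirror_complete_edges: "S \<in> complete_edges n r \<Longrightarrow> mirror n S \<in> complete_edges n r"
  unfolding complete_edges_def using mirror_subset card_mirror by auto

lemma strict_mono_on_mirrored:
  fixes f :: "nat \<Rightarrow> nat"
  assumes "strict_mono_on {1..s} f" and "f ` {1..s} \<subseteq> {1..n}"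
  shows "strict_mono_on {1..s} (\<lambda>i. n + 1 - f (s + 1 - i))"
proof (rule strict_mono_onI)
  fix i j :: nat assume "i \<in> {1..s}" "j \<in> {1..s}" "i < j"
  then have "s + 1 - j \<in> {1..s}" "s + 1 - i \<in> {1..s}" "s + 1 - j < s + 1 - i" by auto
  then have "f (s + 1 - j) < f (s + 1 - i)" "f (s + 1 - i) \<in> {1..n}"
    using strict_mono_onD[OF assms(1)] assms(2) by blast+
  then show "n + 1 - f (s + 1 - i) < n + 1 - f (s + 1 - j)"
    by (simp add: atLeastAtMost_iff)
qed

lemma image_mirrored_prefix:
  fixes f :: "nat \<Rightarrow> nat"
  assumes "j \<le> s"
  shows "(\<lambda>i. n + 1 - f (s + 1 - i)) ` {1..j} = mirror n (f ` {s + 1 - j..s})"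
proof -
  have reverse: "(\<lambda>i. s + 1 - i) ` {1..j} = {s + 1 - j..s}"
  proof (intro equalityI subsetI)
    fix x assume "x \<in> {s + 1 - j..s}"
    then show "x \<in> (\<lambda>i. s + 1 - i) ` {1..j}"
      using assms by (intro image_eqI[where x = "s + 1 - x"]) auto
  qed auto
  have "(\<lambda>i. n + 1 - f (s + 1 - i)) ` {1..j}
      = (\<lambda>x. n + 1 - x) ` f ` (\<lambda>i. s + 1 - i) ` {1..j}"
    by (simp add: image_image)
  also have "\<dots> = mirror n (f ` {s + 1 - j..s})"
    unfolding mirror_def reverse ..
  finally show ?thesis .
qed

lemma image_mirrored_subset:
  fixes f :: "nat \<Rightarrow> nat"
  assumes "f ` {1..s} \<subseteq> {1..n}"
  shows "(\<lambda>i. n + 1 - f (s + 1 - i)) ` {1..s} \<subseteq> {1..n}"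
  using image_mirrored_prefix[where j = s and s = s and f = f and n = n] mirror_subset[OF assms] by simp

definition left_biased_sets :: "nat \<Rightarrow> nat \<Rightarrow> nat \<Rightarrow> nat set set" where
  "left_biased_sets n t m = {S. S \<subseteq> {1..n} \<and> card S = t \<and> left_biased n m S}"

lemma card_left_biased_sets: "card (left_biased_sets n t m) = h n t m"
  unfolding left_biased_sets_def h_def ..

lemma left_biased_sets_subset_complete_edges: "left_biased_sets n t m \<subseteq> complete_edges n t"
  unfolding left_biased_sets_def complete_edges_def by auto

lemma finite_left_biased_sets: "finite (left_biased_sets n t m)"
  by (rule finite_subset[of _ "Pow {1..n}"]) (auto simp: left_biased_sets_def)

lemma left_biasedI:
  assumes "2 * k \<le> n" and "card ({1..k} \<inter> S) = m" and "\<forall>x\<in>S. x + k \<le> n"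
  shows "left_biased n m S"
  unfolding left_biased_def
proof (intro exI conjI)
  show "interval_partition n {1..k} {k+1..n-k} {n-k+1..n}"
    unfolding interval_partition_def using assms(1) by (intro exI[of _ k] exI[of _ "n-k"]) auto
  show "card {1..k} = card {n-k+1..n}" using assms(1) by simp
  show "card ({1..k} \<inter> S) = m" by fact
  have "{n-k+1..n} \<inter> S = {}" using assms(3) by fastforce
  then show "card ({n-k+1..n} \<inter> S) = 0" by simp
qed

lemma card_image_strict_mono_on:
  fixes f :: "nat \<Rightarrow> nat"
  assumes "strict_mono_on {1..s} f" and "1 \<le> a" and "b \<le> s"
  shows "card (f ` {a..b}) = b + 1 - a"
proof -
  have "inj_on f {a..b}"
    using strict_mono_on_imp_inj_on[OF assms(1)] assms(2,3) by (auto intro: inj_on_subset)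
  then show ?thesis by (simp add: card_image)
qed

text \<open>The cut X = {1..f k} contains exactly the first k vertices, and the window
  Z = {n - f k + 1..n} lies beyond f j.\<close>

lemma image_prefix_in_left_biased_sets:
  fixes f :: "nat \<Rightarrow> nat"
  assumes mono: "strict_mono_on {1..s} f" and range: "f ` {1..s} \<subseteq> {1..n}"
    and "1 \<le> k" and "k \<le> j" and "j \<le> s" and sum: "f k + f j \<le> n"
  shows "f ` {1..j} \<in> left_biased_sets n j k"
proof -
  have le_iff: "f i \<le> f i' \<longleftrightarrow> i \<le> i'" if "i \<in> {1..s}" "i' \<in> {1..s}" for i i'
    using strict_mono_on_less_eq[OF mono that] .
  have "f k \<le> f j"
    using le_iff[of k j] assms(3-5) by simp
  have "{1..f k} \<inter> f ` {1..j} = f ` {1..k}"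
  proof (intro equalityI subsetI)
    fix x assume "x \<in> {1..f k} \<inter> f ` {1..j}"
    then obtain i where "i \<in> {1..j}" "x = f i" "f i \<le> f k" by auto
    then show "x \<in> f ` {1..k}" using le_iff[of i k] assms(3-5) by auto
  next
    fix x assume "x \<in> f ` {1..k}"
    then obtain i where "i \<in> {1..k}" "x = f i" by auto
    moreover have "i \<in> {1..s}" using \<open>i \<in> {1..k}\<close> assms(4,5) by auto
    then have "f i \<in> {1..n}" using range by blast
    ultimately show "x \<in> {1..f k} \<inter> f ` {1..j}" using le_iff[of i k] assms(4,5) by auto
  qed
  then have "card ({1..f k} \<inter> f ` {1..j}) = k"
    using card_image_strict_mono_on[OF mono, of 1 k] assms(3-5) by simp
  moreover have "\<forall>x \<in> f ` {1..j}. x + f k \<le> n"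
  proof
    fix x assume "x \<in> f ` {1..j}"
    then obtain i where "i \<in> {1..j}" "x = f i" by auto
    then have "f i \<le> f j" using le_iff[of i j] assms(5) by auto
    then show "x + f k \<le> n" using \<open>x = f i\<close> sum by linarith
  qed
  moreover have "2 * f k \<le> n"
    using \<open>f k \<le> f j\<close> sum by linarith
  ultimately have "left_biased n k (f ` {1..j})"
    by (intro left_biasedI)
  moreover have "f ` {1..j} \<subseteq> {1..n}" "card (f ` {1..j}) = j"
    using range assms(5) card_image_strict_mono_on[OF mono, of 1 j] by auto
  ultimately show ?thesis unfolding left_biased_sets_def by simp
qed

definition add_mirror :: "nat \<Rightarrow> nat \<Rightarrow> nat set \<Rightarrow> nat set" where
  "add_mirror n m S = insert (n + 1 - sorted_list_of_set S ! (m - 1)) S"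

lemma sorted_list_of_set_image_strict_mono_on:
  fixes f :: "nat \<Rightarrow> nat"
  assumes "strict_mono_on {1..s} f" and "j \<le> s"
  shows "sorted_list_of_set (f ` {1..j}) = map f [1..<j + 1]"
proof -
  have "sorted_wrt (<) (map f [1..<j + 1])"
    unfolding sorted_wrt_map
    by (rule sorted_wrt_mono_rel[OF _ sorted_wrt_upt])
      (use assms in \<open>auto simp: strict_mono_on_less[OF assms(1)]\<close>)
  moreover have "set (map f [1..<j + 1]) = f ` {1..j}"
    by auto
  moreover have "length (map f [1..<j + 1]) = card (f ` {1..j})"
    using card_image_strict_mono_on[OF assms(1) _ assms(2)] by simp
  ultimately show ?thesis
    using sorted_list_of_set_unique[of "f ` {1..j}"] by blast
qed

lemma add_mirror_image_prefix:
  fixes f :: "nat \<Rightarrow> nat"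
  assumes "strict_mono_on {1..s} f" and "1 \<le> m" and "m < r" and "r \<le> s"
    and "f m + f r = n + 1"
  shows "add_mirror n m (f ` {1..r - 1}) = f ` {1..r}"
proof -
  have "sorted_list_of_set (f ` {1..r - 1}) ! (m - 1) = f m"
    using sorted_list_of_set_image_strict_mono_on[OF assms(1), of "r - 1"] assms(2-4) by simp
  moreover have "n + 1 - f m = f r"
    using assms(5) by linarith
  ultimately have "add_mirror n m (f ` {1..r - 1}) = insert (f r) (f ` {1..r - 1})"
    unfolding add_mirror_def by simp
  moreover have "{1..r} = insert r {1..r - 1}" using assms(2,3) by auto
  ultimately show ?thesis by simp
qed

definition loose_path_transversal :: "nat \<Rightarrow> nat \<Rightarrow> nat \<Rightarrow> nat set set" where
  "loose_path_transversal n r m = left_biased_sets n r m \<union> mirror n ` left_biased_sets n r m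
     \<union> (add_mirror n m ` left_biased_sets n (r - 1) m \<inter> complete_edges n r)"

lemma loose_path_copy_meets_transversal:
  fixes f :: "nat \<Rightarrow> nat"
  assumes "even n" and "1 \<le> r" and "r \<le> s" and "s \<le> 2 * r - 1" and m: "m = s - r + 1"
    and mono: "strict_mono_on {1..s} f" and range: "f ` {1..s} \<subseteq> {1..n}"
  shows "f ` {1..r} \<in> loose_path_transversal n r m \<or> f ` {m..s} \<in> loose_path_transversal n r m"
proof -
  have "1 \<le> m" "m \<le> r" using assms(2-5) by auto
  have "m \<in> {1..s}" "r \<in> {1..s}"
    using \<open>1 \<le> m\<close> \<open>m \<le> r\<close> assms(2,3) by auto
  then have "f m \<in> {1..n}" "f r \<in> {1..n}"
    using range by blast+
  consider (low) "f m + f r \<le> n" | (high) "n + 2 \<le> f m + f r" | (middle) "f m + f r = n + 1"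
    by linarith
  then show ?thesis
  proof cases
    case low
    then have "f ` {1..r} \<in> left_biased_sets n r m"
      using image_prefix_in_left_biased_sets[OF mono range] \<open>1 \<le> m\<close> \<open>m \<le> r\<close> assms(3)
      by blast
    then show ?thesis unfolding loose_path_transversal_def by blast
  next
    case high
    define g where "g i = n + 1 - f (s + 1 - i)" for i
    have g_mono: "strict_mono_on {1..s} g" and g_range: "g ` {1..s} \<subseteq> {1..n}"
      unfolding g_def using strict_mono_on_mirrored[OF mono range] image_mirrored_subset[OF range] .
    have "s + 1 - m = r" "s + 1 - r = m" using m assms(3) by auto
    then have "g m + g r \<le> n"
      unfolding g_def using high \<open>f m \<in> {1..n}\<close> \<open>f r \<in> {1..n}\<close> by auto
    then have "g ` {1..r} \<in> left_biased_sets n r m"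
      using image_prefix_in_left_biased_sets[OF g_mono g_range] \<open>1 \<le> m\<close> \<open>m \<le> r\<close> assms(3)
      by blast
    moreover have "f ` {m..s} = mirror n (g ` {1..r})"
    proof -
      have "g ` {1..r} = mirror n (f ` {m..s})"
        unfolding g_def using image_mirrored_prefix[OF assms(3)] \<open>s + 1 - r = m\<close> by simp
      moreover have "f ` {m..s} \<subseteq> {1..n}"
        using range \<open>1 \<le> m\<close> by auto
      ultimately show ?thesis using mirror_mirror by simp
    qed
    ultimately have "f ` {m..s} \<in> mirror n ` left_biased_sets n r m"
      by (rule rev_image_eqI)
    then show ?thesis unfolding loose_path_transversal_def by blast
  next
    case middle
    have "m < r"
    proof (rule ccontr)
      assume "\<not> m < r"
      with \<open>m \<le> r\<close> middle have "2 * f r = n + 1" by simp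
      with \<open>even n\<close> show False by presburger
    qed
    have "f (r - 1) < f r"
      using strict_mono_onD[OF mono] \<open>1 \<le> m\<close> \<open>m < r\<close> assms(3) by auto
    then have "f ` {1..r - 1} \<in> left_biased_sets n (r - 1) m"
      using image_prefix_in_left_biased_sets[OF mono range, of m "r - 1"] middle
        \<open>1 \<le> m\<close> \<open>m < r\<close> assms(3) by simp
    then have "f ` {1..r} \<in> add_mirror n m ` left_biased_sets n (r - 1) m"
      using add_mirror_image_prefix[OF mono \<open>1 \<le> m\<close> \<open>m < r\<close> assms(3) middle, symmetric]
      by (rule rev_image_eqI)
    moreover have "f ` {1..r} \<in> complete_edges n r"
      unfolding complete_edges_def
      using range assms(3) card_image_strict_mono_on[OF mono, of 1 r] by auto
    ultimately show ?thesis
      unfolding loose_path_transversal_def by blast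
  qed
qed

lemma is_transversal_loose_path:
  assumes "even n" and "1 \<le> r" and "r \<le> s" and "s \<le> 2 * r - 1" and m: "m = s - r + 1"
  shows "is_transversal n r s (loose_path r s) (loose_path_transversal n r m)"
  unfolding is_transversal_def
proof (intro conjI ballI)
  have "mirror n ` left_biased_sets n r m \<subseteq> complete_edges n r"
    using left_biased_sets_subset_complete_edges mirror_complete_edges by blast
  then show "loose_path_transversal n r m \<subseteq> complete_edges n r"
    unfolding loose_path_transversal_def using left_biased_sets_subset_complete_edges by blast
next
  fix C assume "C \<in> copies n s (loose_path r s)"
  then obtain f :: "nat \<Rightarrow> nat" where f: "strict_mono_on {1..s} f" "f ` {1..s} \<subseteq> {1..n}"
    and C: "C = (\<lambda>e. f ` e) ` loose_path r s"
    unfolding copies_def by blast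
  have "C = {f ` {1..r}, f ` {m..s}}"
    unfolding C loose_path_def m by simp
  then show "loose_path_transversal n r m \<inter> C \<noteq> {}"
    using loose_path_copy_meets_transversal[OF assms f] by auto
qed

lemma card_loose_path_transversal:
  "card (loose_path_transversal n r m) \<le> 2 * h n r m + h n (r - 1) m"
proof -
  let ?L = "left_biased_sets n r m" and ?L' = "left_biased_sets n (r - 1) m"
  have "card (mirror n ` ?L) \<le> card ?L"
    by (rule card_image_le[OF finite_left_biased_sets])
  moreover have "card (add_mirror n m ` ?L' \<inter> complete_edges n r) \<le> card ?L'"
    using card_mono[OF finite_imageI[OF finite_left_biased_sets] Int_lower1]
      card_image_le[OF finite_left_biased_sets] by (rule le_trans)
  moreover have "card (loose_path_transversal n r m) \<le> card ?L + card (mirror n ` ?L)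
      + card (add_mirror n m ` ?L' \<inter> complete_edges n r)"
    unfolding loose_path_transversal_def
    using card_Un_le[of "?L \<union> mirror n ` ?L" "add_mirror n m ` ?L' \<inter> complete_edges n r"]
      card_Un_le[of ?L "mirror n ` ?L"] by linarith
  ultimately show ?thesis
    unfolding card_left_biased_sets[symmetric] by linarith
qed

theorem theorem2p1:
  fixes n r s m :: nat
  assumes "even n" and "1 \<le> r" and "r \<le> s" and "s \<le> 2 * r - 1"
    and "m = s - r + 1"
  shows "tau n r s (tight_path r s) \<le> tau n r s (loose_path r s)
       \<and> tau n r s (loose_path r s) \<le> 2 * h n r m + h n (r - 1) m"
proof
  have T: "is_transversal n r s (loose_path r s) (loose_path_transversal n r m)"
    using is_transversal_loose_path[OF assms] .
  show "tau n r s (tight_path r s) \<le> tau n r s (loose_path r s)"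
    using tau_antimono[OF loose_path_subset_tight_path[OF assms(2,3)] T] .
  show "tau n r s (loose_path r s) \<le> 2 * h n r m + h n (r - 1) m"
    using tau_le_card[OF T] card_loose_path_transversal[of n r m] by linarith
qed

end
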